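(* Let $n\ge2$, $(\mathbf a,\mathbf b),(\mathbf a',\mathbf b')\in\mathtt S_n$, and suppose $\|\mathbf a-\mathbf a'\|_\infty\le\epsilon$ and $\|\mathbf b-\mathbf b'\|_\infty\le\epsilon$ for some $\epsilon>0$. Let $\boldsymbol\gamma,\boldsymbol\gamma'$ be their inverse NLFTs and $\delta:=\min\{a_0,a_0'\}$. Then $$\|\boldsymbol\gamma-\boldsymbol\gamma'\|_1<\epsilon\,(3n)^n(1+1/\delta)^{2n}.$$ Consequently the inverse NLFT is a locally Lipschitz bijection from $\mathtt S_n$ (Euclidean topology) onto its image in $\mathbb C^n$.
   Context: For $(\mathbf a,\mathbf b)\in\mathbb C^n\times\mathbb C^n$ let $a(z)=\sum_{k=0}^{n-1}a_kz^{-k}$, $b(z)=\sum_{k=0}^{n-1}b_kz^k$, and $a^*(z):=\overline{a(1/\overline z)}$ (similarly $b^*$). $\mathtt S_n$ is the set of $(\mathbf a,\mathbf b)$ with $a_0$ real and positive and $aa^*+bb^*=1$. The NLFT of $\boldsymbol\gamma$ supported in $\{0,\dots,n-1\}$ is $\prod_{k=0}^{n-1}\frac{1}{\sqrt{1+|\gamma_k|^2}}\begin{pmatrix}1&\gamma_kz^k\\-\overline{\gamma_k}z^{-k}&1\end{pmatrix}=\begin{pmatrix}a&b\\-b^*&a^*\end{pmatrix}$ (ordered by increasing $k$); it is a bijection from such sequences onto $\mathtt S_n$ and its inverse is the inverse NLFT $(\mathbf a,\mathbf b)\mapsto\boldsymbol\gamma=(\gamma_0,\dots,\gamma_{n-1})$.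 *)

theory Defs
  imports "HOL-Analysis.Analysis"
begin

text \<open>Vectors in C^n are represented as functions nat => complex; only the
indices k < n are relevant (elements of S_n and inverse NLFTs are required to
vanish for k >= n).\<close>

definition mat2 :: "complex \<Rightarrow> complex \<Rightarrow> complex \<Rightarrow> complex \<Rightarrow> complex^2^2" where
  "mat2 p q r s = (\<chi> i j. if i = 1 then (if j = 1 then p else q) else (if j = 1 then r else s))"

definition apoly :: "nat \<Rightarrow> (nat \<Rightarrow> complex) \<Rightarrow> complex \<Rightarrow> complex" where
  "apoly n a z = (\<Sum>k<n. a k * inverse z ^ k)"

definition bpoly :: "nat \<Rightarrow> (nat \<Rightarrow> complex) \<Rightarrow> complex \<Rightarrow> complex" where
  "bpoly n b z = (\<Sum>k<n. b k * z ^ k)"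

definition star :: "(complex \<Rightarrow> complex) \<Rightarrow> complex \<Rightarrow> complex" where
  "star f z = cnj (f (1 / cnj z))"

definition nlft_factor :: "complex \<Rightarrow> nat \<Rightarrow> complex \<Rightarrow> complex^2^2" where
  "nlft_factor g k z =
     (let c = complex_of_real (1 / sqrt (1 + (cmod g)\<^sup>2))
      in mat2 c (c * (g * z ^ k)) (c * (- cnj g * inverse z ^ k)) c)"

definition nlft_mat :: "nat \<Rightarrow> (nat \<Rightarrow> complex) \<Rightarrow> complex \<Rightarrow> complex^2^2" where
  "nlft_mat n \<gamma> z = foldl (\<lambda>M k. M ** nlft_factor (\<gamma> k) k z) (mat 1) [0..<n]"

definition is_nlft :: "nat \<Rightarrow> (nat \<Rightarrow> complex) \<Rightarrow> (nat \<Rightarrow> complex) \<Rightarrow> (nat \<Rightarrow> complex) \<Rightarrow> bool" where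
  "is_nlft n \<gamma> a b \<longleftrightarrow> (\<forall>z. z \<noteq> 0 \<longrightarrow>
     nlft_mat n \<gamma> z = mat2 (apoly n a z) (bpoly n b z) (- star (bpoly n b) z) (star (apoly n a) z))"

definition Sn :: "nat \<Rightarrow> ((nat \<Rightarrow> complex) \<times> (nat \<Rightarrow> complex)) set" where
  "Sn n = {(a, b). (\<forall>k\<ge>n. a k = 0 \<and> b k = 0) \<and> a 0 \<in> \<real> \<and> Re (a 0) > 0 \<and>
     (\<forall>z. z \<noteq> 0 \<longrightarrow> apoly n a z * star (apoly n a) z + bpoly n b z * star (bpoly n b) z = 1)}"

definition inv_nlft :: "nat \<Rightarrow> (nat \<Rightarrow> complex) \<Rightarrow> (nat \<Rightarrow> complex) \<Rightarrow> (nat \<Rightarrow> complex)" where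
  "inv_nlft n a b = (THE \<gamma>. (\<forall>k\<ge>n. \<gamma> k = 0) \<and> is_nlft n \<gamma> a b)"

definition supnorm :: "nat \<Rightarrow> (nat \<Rightarrow> complex) \<Rightarrow> real" where
  "supnorm n v = Max (insert 0 ((\<lambda>k. cmod (v k)) ` {..<n}))"

definition l1norm :: "nat \<Rightarrow> (nat \<Rightarrow> complex) \<Rightarrow> real" where
  "l1norm n v = (\<Sum>k<n. cmod (v k))"

text \<open>Distance on C^n x C^n (max norm; all norms are equivalent in finite dimension).\<close>
definition distS :: "nat \<Rightarrow> (nat \<Rightarrow> complex) \<times> (nat \<Rightarrow> complex) \<Rightarrow> (nat \<Rightarrow> complex) \<times> (nat \<Rightarrow> complex) \<Rightarrow> real" where
  "distS n p q = max (supnorm n (\<lambda>k. fst p k - fst q k)) (supnorm n (\<lambda>k. snd p k - snd q k))"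

end

theory Submission
  imports Defs
begin

text \<open>The inverse NLFT is computed by layer stripping. For (a, b) in S_(m+1) the top coefficient
  of b is gamma_m a_0, so gamma_m = b_m / a_0, and multiplying by the inverse of the last factor
  gives an element of S_m whose a_0 has not decreased. Since the sum of all |a_k|^2 + |b_k|^2 is 1,
  all coefficients have modulus at most 1. Hence, if D bounds 1/a_0 and 1/a_0', one stripping step
  moves gamma_m by at most eps (D + D^2) and the remaining coefficients by at most 3 eps (1 + D)^2;
  summing over the n layers gives the estimate. Injectivity follows from the uniqueness of Laurent
  coefficients, local Lipschitz continuity from the same estimate with D = 2/a_0 near a point.\<close>

section \<open>The NLFT recursion\<close>

lemma mat2_eq_iff:
  "mat2 p q r s = mat2 p' q' r' s' \<longleftrightarrow> p = p' \<and> q = q' \<and> r = r' \<and> s = s'"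
  by (auto simp: mat2_def vec_eq_iff forall_2)

lemma mat2_mult:
  "mat2 p q r s ** mat2 p' q' r' s' =
   mat2 (p * p' + q * r') (p * q' + q * s') (r * p' + s * r') (r * q' + s * s')"
  by (simp add: vec_eq_iff matrix_matrix_mult_def sum_2 forall_2 mat2_def)

lemma star_apoly: "star (apoly n a) z = (\<Sum>k<n. cnj (a k) * z ^ k)"
  by (simp add: star_def apoly_def)

lemma star_bpoly: "star (bpoly n b) z = (\<Sum>k<n. cnj (b k) * inverse z ^ k)"
  by (simp add: star_def bpoly_def divide_inverse)

lemma apoly_cong: "(\<And>k. k < n \<Longrightarrow> a k = a' k) \<Longrightarrow> apoly n a z = apoly n a' z"
  by (simp add: apoly_def)

lemma bpoly_cong: "(\<And>k. k < n \<Longrightarrow> b k = b' k) \<Longrightarrow> bpoly n b z = bpoly n b' z"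
  by (simp add: bpoly_def)

lemma apoly_Suc_eq: "a m = 0 \<Longrightarrow> apoly (Suc m) a = apoly m a"
  by (rule ext) (simp add: apoly_def)

lemma bpoly_Suc_eq: "b m = 0 \<Longrightarrow> bpoly (Suc m) b = bpoly m b"
  by (rule ext) (simp add: bpoly_def)

lemma nlft_mat_Suc: "nlft_mat (Suc m) \<gamma> z = nlft_mat m \<gamma> z ** nlft_factor (\<gamma> m) m z"
  by (simp add: nlft_mat_def)

lemma nlft_mat_cong: "(\<And>k. k < n \<Longrightarrow> \<gamma> k = \<gamma>' k) \<Longrightarrow> nlft_mat n \<gamma> z = nlft_mat n \<gamma>' z"
  unfolding nlft_mat_def by (rule foldl_cong) auto

lemma sum_reflect: "(\<Sum>j<Suc m. f (m - j)) = (\<Sum>j<Suc m. f j :: 'a::comm_monoid_add)"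
  using sum.nat_diff_reindex[of f "Suc m"] by simp

lemma sum_reflect_power:
  fixes w :: "'a::field"
  assumes "w \<noteq> 0"
  shows "(\<Sum>j<Suc m. y (m - j) * w ^ j) = w ^ m * (\<Sum>j<Suc m. y j * inverse w ^ j)"
proof -
  have "(\<Sum>j<Suc m. y (m - j) * w ^ j) = (\<Sum>j<Suc m. y (m - j) * w ^ (m - (m - j)))"
    by (rule sum.cong) auto
  also have "\<dots> = (\<Sum>j<Suc m. y j * w ^ (m - j))"
    by (rule sum_reflect)
  also have "\<dots> = (\<Sum>j<Suc m. w ^ m * (y j * inverse w ^ j))"
    by (rule sum.cong) (auto simp: power_diff assms divide_inverse power_inverse)
  finally show ?thesis
    by (simp only: sum_distrib_left)
qed

lemma isCont_eq_if_eq_off: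
  fixes f g :: "'a::{t2_space, perfect_space} \<Rightarrow> 'b::t2_space"
  assumes "isCont f z" "isCont g z" "\<And>w. w \<noteq> z \<Longrightarrow> f w = g w"
  shows "f z = g z"
  using eventually_nhds_x_imp_x[OF at_within_isCont_imp_nhds[OF _ assms(1,2)]] assms(3)
  by (auto simp: eventually_at_filter)

lemma poly_vanishing_coeff_eq_0:
  "(\<And>z. z \<noteq> 0 \<Longrightarrow> (\<Sum>k<n. d k * z ^ k) = (0::complex)) \<Longrightarrow> k < n \<Longrightarrow> d k = 0"
proof (induction n arbitrary: d k)
  case 0
  then show ?case by simp
next
  case (Suc n)
  have "(\<lambda>z. \<Sum>k<Suc n. d k * z ^ k) 0 = (\<lambda>z. 0) 0"
    by (rule isCont_eq_if_eq_off) (use Suc.prems(1) in \<open>auto intro!: continuous_intros\<close>)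
  then have d0: "d 0 = 0"
    by (simp add: sum.lessThan_Suc_shift)
  have "(\<Sum>k<n. d (Suc k) * z ^ k) = 0" if z: "z \<noteq> 0" for z
  proof -
    have "z * (\<Sum>k<n. d (Suc k) * z ^ k) = (\<Sum>k<Suc n. d k * z ^ k)"
      unfolding sum.lessThan_Suc_shift
      by (simp add: d0 sum_distrib_left algebra_simps del: sum.lessThan_Suc)
    then show ?thesis
      using Suc.prems(1) z by simp
  qed
  with Suc.IH[of "\<lambda>k. d (Suc k)"] d0 \<open>k < Suc n\<close> show ?case
    by (cases k) auto
qed

lemma bpoly_coeffs_eq:
  assumes "\<And>z. z \<noteq> 0 \<Longrightarrow> bpoly n b z = bpoly n b' z" "k < n"
  shows "b k = b' k"
proof -
  have "(\<Sum>k<n. (b k - b' k) * z ^ k) = 0" if "z \<noteq> 0" for z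
    using assms(1)[OF that] by (simp add: bpoly_def algebra_simps sum_subtractf)
  from poly_vanishing_coeff_eq_0[OF this assms(2)] show ?thesis
    by simp
qed

lemma apoly_coeffs_eq:
  assumes "\<And>z. z \<noteq> 0 \<Longrightarrow> apoly n a z = apoly n a' z" "k < n"
  shows "a k = a' k"
proof -
  have "(\<Sum>k<n. (a k - a' k) * z ^ k) = 0" if "z \<noteq> 0" for z
    using assms(1)[of "inverse z"] that by (simp add: apoly_def algebra_simps sum_subtractf)
  from poly_vanishing_coeff_eq_0[OF this assms(2)] show ?thesis
    by simp
qed

lemma is_nlft_coeffs_eq:
  assumes "is_nlft n \<gamma> a b" "is_nlft n \<gamma> a' b'" "k < n"
  shows "a k = a' k \<and> b k = b' k"
proof -
  have "apoly n a z = apoly n a' z" "bpoly n b z = bpoly n b' z" if "z \<noteq> 0" for z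
    using assms(1,2) that by (auto simp: is_nlft_def mat2_eq_iff)
  then show ?thesis
    using apoly_coeffs_eq bpoly_coeffs_eq assms(3) by blast
qed

lemma is_nlft_cong:
  assumes "is_nlft n \<gamma> a b" "\<And>k. k < n \<Longrightarrow> a k = a' k" "\<And>k. k < n \<Longrightarrow> b k = b' k"
  shows "is_nlft n \<gamma> a' b'"
proof -
  have "apoly n a = apoly n a'" "bpoly n b = bpoly n b'"
    using assms(2,3) by (auto intro!: ext apoly_cong bpoly_cong)
  then show ?thesis
    using assms(1) by (simp add: is_nlft_def)
qed

definition nlft_scale :: "complex \<Rightarrow> real" where
  "nlft_scale g = 1 / sqrt (1 + (cmod g)\<^sup>2)"

text \<open>The first row of the NLFT after appending the factor with gamma_m = g (is_nlft_snoc).\<close>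

definition step_a :: "nat \<Rightarrow> complex \<Rightarrow> (nat \<Rightarrow> complex) \<Rightarrow> (nat \<Rightarrow> complex) \<Rightarrow> nat \<Rightarrow> complex" where
  "step_a m g a b j = (if j \<le> m then of_real (nlft_scale g) * (a j - cnj g * b (m - j)) else 0)"

definition step_b :: "nat \<Rightarrow> complex \<Rightarrow> (nat \<Rightarrow> complex) \<Rightarrow> (nat \<Rightarrow> complex) \<Rightarrow> nat \<Rightarrow> complex" where
  "step_b m g a b j = (if j \<le> m then of_real (nlft_scale g) * (b j + g * a (m - j)) else 0)"

lemma nlft_scale_pos: "nlft_scale g > 0"
  by (simp add: nlft_scale_def add_pos_nonneg)

lemma nlft_scale_le_1: "nlft_scale g \<le> 1"
  by (simp add: nlft_scale_def divide_le_eq_1 add_pos_nonneg)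

lemma nlft_scale_uminus [simp]: "nlft_scale (- g) = nlft_scale g"
  by (simp add: nlft_scale_def)

lemma nlft_scale_sq: "(of_real (nlft_scale g))\<^sup>2 * (1 + g * cnj g) = 1"
proof -
  have "(nlft_scale g)\<^sup>2 * (1 + (cmod g)\<^sup>2) = 1"
    using add_pos_nonneg[of 1 "(cmod g)\<^sup>2"] by (simp add: nlft_scale_def power_divide)
  moreover have "g * cnj g = of_real ((cmod g)\<^sup>2)"
    using complex_norm_square[of g] by simp
  ultimately show ?thesis
    by (metis of_real_1 of_real_add of_real_mult of_real_power)
qed

lemma nlft_factor_eq:
  "nlft_factor g k z =
   (let c = of_real (nlft_scale g) in mat2 c (c * (g * z ^ k)) (c * (- cnj g * inverse z ^ k)) c)"
  by (simp add: nlft_factor_def nlft_scale_def)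

lemma apoly_step_a:
  assumes "z \<noteq> 0"
  shows "apoly (Suc m) (step_a m g a b) z =
    of_real (nlft_scale g) * (apoly (Suc m) a z - cnj g * inverse z ^ m * bpoly (Suc m) b z)"
proof -
  let ?c = "of_real (nlft_scale g) :: complex"
  have "apoly (Suc m) (step_a m g a b) z =
      (\<Sum>j<Suc m. ?c * (a j * inverse z ^ j) - ?c * cnj g * (b (m - j) * inverse z ^ j))"
    unfolding apoly_def step_a_def by (intro sum.cong) (auto simp: algebra_simps)
  also have "\<dots> = ?c * apoly (Suc m) a z - ?c * cnj g * (\<Sum>j<Suc m. b (m - j) * inverse z ^ j)"
    by (simp only: sum_subtractf sum_distrib_left apoly_def)
  also have "(\<Sum>j<Suc m. b (m - j) * inverse z ^ j) = inverse z ^ m * bpoly (Suc m) b z"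
    using sum_reflect_power[of "inverse z" b m] assms by (simp add: bpoly_def)
  finally show ?thesis
    by (simp add: algebra_simps)
qed

lemma bpoly_step_b:
  assumes "z \<noteq> 0"
  shows "bpoly (Suc m) (step_b m g a b) z =
    of_real (nlft_scale g) * (bpoly (Suc m) b z + g * z ^ m * apoly (Suc m) a z)"
proof -
  let ?c = "of_real (nlft_scale g) :: complex"
  have "bpoly (Suc m) (step_b m g a b) z =
      (\<Sum>j<Suc m. ?c * (b j * z ^ j) + ?c * g * (a (m - j) * z ^ j))"
    unfolding bpoly_def step_b_def by (intro sum.cong) (auto simp: algebra_simps)
  also have "\<dots> = ?c * bpoly (Suc m) b z + ?c * g * (\<Sum>j<Suc m. a (m - j) * z ^ j)"
    by (simp only: sum.distrib sum_distrib_left bpoly_def)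
  also have "(\<Sum>j<Suc m. a (m - j) * z ^ j) = z ^ m * apoly (Suc m) a z"
    using sum_reflect_power[of z a m] assms by (simp add: apoly_def)
  finally show ?thesis
    by (simp add: algebra_simps)
qed

lemma star_apoly_step_a:
  assumes "z \<noteq> 0"
  shows "star (apoly (Suc m) (step_a m g a b)) z =
    of_real (nlft_scale g) * (star (apoly (Suc m) a) z - g * z ^ m * star (bpoly (Suc m) b) z)"
  using assms unfolding star_def by (simp add: apoly_step_a power_inverse)

lemma star_bpoly_step_b:
  assumes "z \<noteq> 0"
  shows "star (bpoly (Suc m) (step_b m g a b)) z =
    of_real (nlft_scale g) * (star (bpoly (Suc m) b) z + cnj g * inverse z ^ m * star (apoly (Suc m) a) z)"
  using assms unfolding star_def by (simp add: bpoly_step_b power_inverse divide_inverse)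

lemma is_nlft_snoc:
  assumes "is_nlft m \<gamma> a b" "\<forall>k\<ge>m. a k = 0 \<and> b k = 0" "\<And>k. k < m \<Longrightarrow> \<gamma>' k = \<gamma> k"
  shows "is_nlft (Suc m) \<gamma>' (step_a m (\<gamma>' m) a b) (step_b m (\<gamma>' m) a b)"
  unfolding is_nlft_def
proof (intro allI impI)
  fix z :: complex
  assume z: "z \<noteq> 0"
  let ?g = "\<gamma>' m"
  have "nlft_mat (Suc m) \<gamma>' z = nlft_mat m \<gamma> z ** nlft_factor ?g m z"
    using nlft_mat_cong[of m \<gamma>' \<gamma> z] assms(3) by (simp add: nlft_mat_Suc)
  also have "\<dots> = mat2 (apoly (Suc m) a z) (bpoly (Suc m) b z)
      (- star (bpoly (Suc m) b) z) (star (apoly (Suc m) a) z) ** nlft_factor ?g m z"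
    using assms(1,2) z by (simp add: is_nlft_def apoly_Suc_eq bpoly_Suc_eq)
  finally show "nlft_mat (Suc m) \<gamma>' z =
      mat2 (apoly (Suc m) (step_a m ?g a b) z) (bpoly (Suc m) (step_b m ?g a b) z)
        (- star (bpoly (Suc m) (step_b m ?g a b)) z) (star (apoly (Suc m) (step_a m ?g a b)) z)"
    unfolding apoly_step_a[OF z] bpoly_step_b[OF z] star_apoly_step_a[OF z] star_bpoly_step_b[OF z]
    by (simp add: nlft_factor_eq Let_def mat2_mult mat2_eq_iff algebra_simps)
qed

lemma is_nlft_1:
  "is_nlft 1 \<gamma> (\<lambda>k. if k = 0 then of_real (nlft_scale (\<gamma> 0)) else 0)
              (\<lambda>k. if k = 0 then of_real (nlft_scale (\<gamma> 0)) * \<gamma> 0 else 0)"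
  unfolding is_nlft_def
  by (simp add: nlft_mat_def nlft_factor_eq Let_def apoly_def bpoly_def star_def mat2_eq_iff)

lemma ex_is_nlft: "n \<ge> 1 \<Longrightarrow> \<exists>a b. (\<forall>k\<ge>n. a k = 0 \<and> b k = 0) \<and> is_nlft n \<gamma> a b"
proof (induction n rule: dec_induct)
  case base
  show ?case
    by (rule exI, rule exI, rule conjI[OF _ is_nlft_1]) auto
next
  case (step m)
  then obtain a b where "\<forall>k\<ge>m. a k = 0 \<and> b k = 0" "is_nlft m \<gamma> a b"
    by blast
  then have "is_nlft (Suc m) \<gamma> (step_a m (\<gamma> m) a b) (step_b m (\<gamma> m) a b)"
    by (intro is_nlft_snoc) auto
  moreover have "\<forall>k\<ge>Suc m. step_a m (\<gamma> m) a b k = 0 \<and> step_b m (\<gamma> m) a b k = 0"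
    by (simp add: step_a_def step_b_def)
  ultimately show ?case
    by blast
qed

lemma step_uminus_step:
  "step_a m g (step_a m (- g) a b) (step_b m (- g) a b) k = (if k \<le> m then a k else 0) \<and>
   step_b m g (step_a m (- g) a b) (step_b m (- g) a b) k = (if k \<le> m then b k else 0)"
proof (cases "k \<le> m")
  case True
  let ?c = "of_real (nlft_scale g) :: complex"
  have c: "?c * ?c * (1 + g * cnj g) = 1"
    using nlft_scale_sq[of g] by (simp add: power2_eq_square)
  have mk: "m - (m - k) = k"
    using True by simp
  have "step_a m g (step_a m (- g) a b) (step_b m (- g) a b) k = ?c * ?c * (1 + g * cnj g) * a k"
    "step_b m g (step_a m (- g) a b) (step_b m (- g) a b) k = ?c * ?c * (1 + g * cnj g) * b k"
    using True by (simp_all add: step_a_def step_b_def mk algebra_simps)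
  with True c show ?thesis
    by simp
next
  case False
  then show ?thesis
    by (simp add: step_a_def step_b_def)
qed

lemma step_cong:
  assumes "\<And>k. k \<le> m \<Longrightarrow> a k = a' k \<and> b k = b' k"
  shows "step_a m g a b = step_a m g a' b'" "step_b m g a b = step_b m g a' b'"
  using assms by (auto simp: step_a_def step_b_def fun_eq_iff)

lemma unitary_step:
  assumes "z \<noteq> 0"
  shows "apoly (Suc m) (step_a m g a b) z * star (apoly (Suc m) (step_a m g a b)) z
       + bpoly (Suc m) (step_b m g a b) z * star (bpoly (Suc m) (step_b m g a b)) z
       = apoly (Suc m) a z * star (apoly (Suc m) a) z + bpoly (Suc m) b z * star (bpoly (Suc m) b) z"
proof -
  let ?c = "of_real (nlft_scale g) :: complex" and ?w = "z ^ m" and ?v = "inverse z ^ m"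
  have wv: "?w * ?v = 1"
    using assms by (simp add: power_inverse field_simps)
  have expand: "(?c * (A - cnj g * ?v * B)) * (?c * (As - g * ?w * Bs))
      + (?c * (B + g * ?w * A)) * (?c * (Bs + cnj g * ?v * As))
      = ?c\<^sup>2 * (1 + g * cnj g * (?w * ?v)) * (A * As + B * Bs)" for A As B Bs
    by (simp add: power2_eq_square algebra_simps)
  show ?thesis
    unfolding apoly_step_a[OF assms] bpoly_step_b[OF assms] star_apoly_step_a[OF assms]
      star_bpoly_step_b[OF assms] expand wv
    using nlft_scale_sq[of g] by simp
qed

section \<open>Layer stripping\<close>

lemma SnD:
  assumes "(a, b) \<in> Sn n"
  shows "\<And>k. n \<le> k \<Longrightarrow> a k = 0" "\<And>k. n \<le> k \<Longrightarrow> b k = 0"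
    "a 0 = of_real (Re (a 0))" "Re (a 0) > 0"
    "\<And>z. z \<noteq> 0 \<Longrightarrow> apoly n a z * star (apoly n a) z + bpoly n b z * star (bpoly n b) z = 1"
  using assms by (auto simp: Sn_def complex_is_Real_iff)

lemma Sn_length_pos: "(a, b) \<in> Sn n \<Longrightarrow> n \<ge> 1"
  by (cases n) (auto simp: Sn_def)

text \<open>For m \<ge> 1 the constant coefficient of the polynomial z^m (a a* + b b*) = z^m vanishes.\<close>

lemma Sn_coeff_orth:
  assumes ab: "(a, b) \<in> Sn (Suc m)" and m: "m \<ge> 1"
  shows "a m * cnj (a 0) + b 0 * cnj (b m) = 0"
proof -
  define F where "F z = (\<Sum>j<Suc m. a j * z ^ (m - j)) * (\<Sum>i<Suc m. cnj (a i) * z ^ i)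
      + (\<Sum>j<Suc m. b j * z ^ j) * (\<Sum>i<Suc m. cnj (b i) * z ^ (m - i))" for z
  have "F 0 = (\<lambda>z. z ^ m) 0"
  proof (rule isCont_eq_if_eq_off[where f = F and g = "\<lambda>z. z ^ m"])
    show "isCont F 0"
      unfolding F_def by (intro continuous_intros)
    show "isCont (\<lambda>z::complex. z ^ m) 0"
      by (intro continuous_intros)
    fix z :: complex
    assume z: "z \<noteq> 0"
    have "(\<Sum>j<Suc m. a j * z ^ (m - j)) = z ^ m * apoly (Suc m) a z"
      unfolding apoly_def sum_distrib_left
      by (rule sum.cong) (auto simp: power_diff z divide_inverse power_inverse)
    moreover have "(\<Sum>i<Suc m. cnj (b i) * z ^ (m - i)) = z ^ m * star (bpoly (Suc m) b) z"
      unfolding star_bpoly sum_distrib_left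
      by (rule sum.cong) (auto simp: power_diff z divide_inverse power_inverse)
    ultimately have "F z = z ^ m * (apoly (Suc m) a z * star (apoly (Suc m) a) z
        + bpoly (Suc m) b z * star (bpoly (Suc m) b) z)"
      unfolding F_def star_apoly by (simp add: bpoly_def algebra_simps)
    then show "F z = z ^ m"
      using SnD(5)[OF ab z] by simp
  qed
  moreover have "F 0 = a m * cnj (a 0) + b 0 * cnj (b m)"
  proof -
    have "(\<Sum>j<Suc m. f j * 0 ^ (m - j)) = f m" for f :: "nat \<Rightarrow> complex"
      by (simp add: sum.lessThan_Suc) (rule sum.neutral, simp)
    then show ?thesis
      unfolding F_def by (simp add: sum.lessThan_Suc_shift)
  qed
  ultimately show ?thesis
    using m by simp
qed

lemma step_a_strip_0:
  assumes "a 0 = of_real r" "r > 0"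
  shows "step_a m (- (b m / a 0)) a b 0 = of_real (r * sqrt (1 + (cmod (b m / a 0))\<^sup>2))"
proof -
  define t where "t = (cmod (b m / a 0))\<^sup>2"
  have t: "t \<ge> 0" "t = (cmod (b m))\<^sup>2 / r\<^sup>2"
    using assms by (simp_all add: t_def norm_divide power_divide)
  have "cnj (b m / a 0) * b m = of_real ((cmod (b m))\<^sup>2 / r)"
    using assms complex_norm_square[of "b m"] by (simp add: mult.commute)
  then have "step_a m (- (b m / a 0)) a b 0 = of_real (nlft_scale (b m / a 0) * (r + (cmod (b m))\<^sup>2 / r))"
    using assms by (simp add: step_a_def)
  also have "r + (cmod (b m))\<^sup>2 / r = r * (1 + t)"
    using assms t by (simp add: field_simps power2_eq_square)
  also have "nlft_scale (b m / a 0) * (r * (1 + t)) = r * sqrt (1 + t)"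
  proof -
    have "(1 + t) / sqrt (1 + t) = sqrt (1 + t)"
      using t by (simp add: real_div_sqrt)
    then show ?thesis
      by (simp add: nlft_scale_def t_def[symmetric]) (metis times_divide_eq_right)
  qed
  finally show ?thesis
    unfolding t_def .
qed

lemma Sn_strip:
  assumes ab: "(a, b) \<in> Sn (Suc m)" and m: "m \<ge> 1"
  defines "g \<equiv> b m / a 0"
  shows "(step_a m (- g) a b, step_b m (- g) a b) \<in> Sn m"
    and "Re (a 0) \<le> Re (step_a m (- g) a b 0)"
proof -
  let ?a = "step_a m (- g) a b" and ?b = "step_b m (- g) a b"
  define r where "r = Re (a 0)"
  have r: "a 0 = of_real r" "r > 0"
    using SnD[OF ab] by (auto simp: r_def)
  have top_a: "?a m = 0"
  proof -
    have "a m + cnj g * b 0 = (a m * cnj (a 0) + b 0 * cnj (b m)) / a 0"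
      using r by (simp add: g_def field_simps)
    then show ?thesis
      using Sn_coeff_orth[OF ab m] by (simp add: step_a_def)
  qed
  have top_b: "?b m = 0"
    using r by (simp add: step_b_def g_def)
  have supp: "\<forall>k\<ge>m. ?a k = 0 \<and> ?b k = 0"
  proof (intro allI impI)
    fix k
    assume "m \<le> k"
    with top_a top_b show "?a k = 0 \<and> ?b k = 0"
      by (cases "k = m") (auto simp: step_a_def step_b_def)
  qed
  have a0: "?a 0 = of_real (r * sqrt (1 + (cmod g)\<^sup>2))"
    unfolding g_def using step_a_strip_0[where a = a and b = b and m = m] r by simp
  have ge: "r \<le> r * sqrt (1 + (cmod g)\<^sup>2)"
    using r(2) by simp
  then have pos: "0 < r * sqrt (1 + (cmod g)\<^sup>2)"
    using r(2) by linarith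
  have "apoly m ?a z * star (apoly m ?a) z + bpoly m ?b z * star (bpoly m ?b) z = 1" if "z \<noteq> 0" for z
    using unitary_step[OF that, of m "- g" a b] SnD(5)[OF ab that] top_a top_b
    by (simp add: apoly_Suc_eq bpoly_Suc_eq)
  with supp a0 pos show "(?a, ?b) \<in> Sn m"
    by (auto simp: Sn_def)
  show "Re (a 0) \<le> Re (?a 0)"
    using a0 ge r_def by simp
qed

lemma norm_step_pair:
  "(cmod (of_real (nlft_scale g) * (x - cnj g * y)))\<^sup>2 + (cmod (of_real (nlft_scale g) * (y + g * x)))\<^sup>2
   = (cmod x)\<^sup>2 + (cmod y)\<^sup>2"
proof -
  let ?c = "of_real (nlft_scale g) :: complex"
  have "of_real ((cmod (?c * (x - cnj g * y)))\<^sup>2 + (cmod (?c * (y + g * x)))\<^sup>2)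
     = (?c * (x - cnj g * y)) * cnj (?c * (x - cnj g * y)) + (?c * (y + g * x)) * cnj (?c * (y + g * x))"
    by (simp only: of_real_add complex_norm_square)
  also have "\<dots> = ?c\<^sup>2 * (1 + g * cnj g) * (x * cnj x + y * cnj y)"
    by (simp add: power2_eq_square algebra_simps)
  also have "\<dots> = of_real ((cmod x)\<^sup>2 + (cmod y)\<^sup>2)"
    by (simp only: nlft_scale_sq of_real_add complex_norm_square mult_1)
  finally show ?thesis
    using of_real_eq_iff by blast
qed

lemma step_sum_sq:
  "(\<Sum>k<Suc m. (cmod (step_a m g a b k))\<^sup>2 + (cmod (step_b m g a b k))\<^sup>2)
   = (\<Sum>k<Suc m. (cmod (a k))\<^sup>2 + (cmod (b k))\<^sup>2)"
proof -
  have "(\<Sum>k<Suc m. (cmod (step_a m g a b k))\<^sup>2 + (cmod (step_b m g a b k))\<^sup>2)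
      = (\<Sum>k<Suc m. (cmod (step_a m g a b k))\<^sup>2 + (cmod (step_b m g a b (m - k)))\<^sup>2)"
    by (simp only: sum.distrib sum_reflect[of "\<lambda>k. (cmod (step_b m g a b k))\<^sup>2"])
  also have "\<dots> = (\<Sum>k<Suc m. (cmod (a k))\<^sup>2 + (cmod (b (m - k)))\<^sup>2)"
  proof (rule sum.cong)
    fix k
    assume "k \<in> {..<Suc m}"
    then have "m - (m - k) = k" "k \<le> m"
      by auto
    then show "(cmod (step_a m g a b k))\<^sup>2 + (cmod (step_b m g a b (m - k)))\<^sup>2
        = (cmod (a k))\<^sup>2 + (cmod (b (m - k)))\<^sup>2"
      using norm_step_pair[of g "a k" "b (m - k)"] by (simp add: step_a_def step_b_def)
  qed simp
  also have "\<dots> = (\<Sum>k<Suc m. (cmod (a k))\<^sup>2 + (cmod (b k))\<^sup>2)"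
    by (simp only: sum.distrib sum_reflect[of "\<lambda>k. (cmod (b k))\<^sup>2"])
  finally show ?thesis .
qed

lemma Sn_sum_sq: "(a, b) \<in> Sn n \<Longrightarrow> (\<Sum>k<n. (cmod (a k))\<^sup>2 + (cmod (b k))\<^sup>2) = 1"
proof (induction n arbitrary: a b)
  case 0
  then show ?case
    using Sn_length_pos by fastforce
next
  case (Suc m)
  consider "m = 0" | "m \<ge> 1"
    by linarith
  then show ?case
  proof cases
    case 1
    have "a 0 * cnj (a 0) + b 0 * cnj (b 0) = 1"
      using SnD(5)[OF Suc.prems, of 1] 1 by (simp add: apoly_def bpoly_def star_apoly star_bpoly)
    then have "of_real ((cmod (a 0))\<^sup>2 + (cmod (b 0))\<^sup>2) = (1::complex)"
      by (simp only: of_real_add complex_norm_square)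
    then have "(cmod (a 0))\<^sup>2 + (cmod (b 0))\<^sup>2 = 1"
      by (metis of_real_eq_1_iff)
    with 1 show ?thesis
      by simp
  next
    case 2
    let ?a = "step_a m (- (b m / a 0)) a b" and ?b = "step_b m (- (b m / a 0)) a b"
    have S: "(?a, ?b) \<in> Sn m"
      by (rule Sn_strip(1)[OF Suc.prems 2])
    have "(\<Sum>k<Suc m. (cmod (a k))\<^sup>2 + (cmod (b k))\<^sup>2) = (\<Sum>k<Suc m. (cmod (?a k))\<^sup>2 + (cmod (?b k))\<^sup>2)"
      by (rule step_sum_sq[symmetric])
    also have "\<dots> = (\<Sum>k<m. (cmod (?a k))\<^sup>2 + (cmod (?b k))\<^sup>2)"
      using SnD(1,2)[OF S, of m] by simp
    also have "\<dots> = 1"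
      by (rule Suc.IH[OF S])
    finally show ?thesis .
  qed
qed

lemma Sn_coeff_le_1:
  assumes "(a, b) \<in> Sn n"
  shows "cmod (a k) \<le> 1 \<and> cmod (b k) \<le> 1"
proof (cases "k < n")
  case True
  have "(cmod (a k))\<^sup>2 + (cmod (b k))\<^sup>2 \<le> (\<Sum>j<n. (cmod (a j))\<^sup>2 + (cmod (b j))\<^sup>2)"
    by (rule member_le_sum) (use True in auto)
  then have "(cmod (a k))\<^sup>2 \<le> 1" "(cmod (b k))\<^sup>2 \<le> 1"
    using Sn_sum_sq[OF assms] zero_le_power2[of "cmod (a k)"] zero_le_power2[of "cmod (b k)"]
    by linarith+
  then show ?thesis
    by (simp add: power_le_one_iff abs_square_le_1)
next
  case False
  then show ?thesis
    using SnD(1,2)[OF assms] by simp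
qed

lemma Sn_1_nlft_scale:
  assumes "(a, b) \<in> Sn 1"
  shows "of_real (nlft_scale (b 0 / a 0)) = a 0"
proof -
  define r where "r = Re (a 0)"
  have r: "r > 0" "a 0 = of_real r"
    using SnD[OF assms] r_def by auto
  have "r\<^sup>2 + (cmod (b 0))\<^sup>2 = 1"
    using Sn_sum_sq[OF assms] r by simp
  then have "1 + (cmod (b 0 / a 0))\<^sup>2 = 1 / r\<^sup>2"
    using r by (simp add: norm_divide power_divide field_simps)
  then have "nlft_scale (b 0 / a 0) = r"
    using r by (simp add: nlft_scale_def real_sqrt_divide)
  then show ?thesis
    using r by simp
qed

text \<open>The factor with -g is the inverse of the factor with g, so stripping the last layer
  multiplies by the factor with -gamma_m, where gamma_m = b_m / a_0 (is_nlft_SucD).\<close>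

fun layer_strip :: "nat \<Rightarrow> (nat \<Rightarrow> complex) \<Rightarrow> (nat \<Rightarrow> complex) \<Rightarrow> nat \<Rightarrow> complex" where
  "layer_strip 0 a b = (\<lambda>k. 0)"
| "layer_strip (Suc m) a b =
    (layer_strip m (step_a m (- (b m / a 0)) a b) (step_b m (- (b m / a 0)) a b))(m := b m / a 0)"

lemma layer_strip_eq_0: "n \<le> k \<Longrightarrow> layer_strip n a b k = 0"
  by (induction n arbitrary: a b) auto

lemma is_nlft_layer_strip: "(a, b) \<in> Sn n \<Longrightarrow> is_nlft n (layer_strip n a b) a b"
proof (induction n arbitrary: a b)
  case 0
  then show ?case
    using Sn_length_pos by fastforce
next
  case (Suc m)
  consider "m = 0" | "m \<ge> 1"
    by linarith
  then show ?case
  proof cases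
    case 1
    have "a 0 \<noteq> 0"
      using SnD(4)[OF Suc.prems] by auto
    then have "is_nlft 1 (layer_strip 1 a b) a b"
      using 1 Sn_1_nlft_scale[of a b] Suc.prems by (intro is_nlft_cong[OF is_nlft_1]) auto
    with 1 show ?thesis
      by (simp add: fun_upd_def)
  next
    case 2
    let ?g = "b m / a 0" and ?\<gamma> = "layer_strip (Suc m) a b"
    let ?a = "step_a m (- ?g) a b" and ?b = "step_b m (- ?g) a b"
    have S: "(?a, ?b) \<in> Sn m"
      by (rule Sn_strip(1)[OF Suc.prems 2])
    have "is_nlft (Suc m) ?\<gamma> (step_a m (?\<gamma> m) ?a ?b) (step_b m (?\<gamma> m) ?a ?b)"
      by (rule is_nlft_snoc[OF Suc.IH[OF S]]) (use SnD(1,2)[OF S] in auto)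
    then show ?thesis
      by (rule is_nlft_cong) (simp_all add: step_uminus_step)
  qed
qed

lemma is_nlft_SucD:
  assumes "is_nlft (Suc m) \<gamma> a b" "m \<ge> 1"
  shows "b m = \<gamma> m * a 0" "is_nlft m \<gamma> (step_a m (- \<gamma> m) a b) (step_b m (- \<gamma> m) a b)"
proof -
  obtain A B where AB: "\<forall>k\<ge>m. A k = 0 \<and> B k = 0" "is_nlft m \<gamma> A B"
    using ex_is_nlft[OF assms(2)] by blast
  have "is_nlft (Suc m) \<gamma> (step_a m (\<gamma> m) A B) (step_b m (\<gamma> m) A B)"
    using AB by (intro is_nlft_snoc) auto
  then have eq: "a k = step_a m (\<gamma> m) A B k \<and> b k = step_b m (\<gamma> m) A B k" if "k \<le> m" for k
    using is_nlft_coeffs_eq[OF assms(1)] that by simp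
  have "B m = 0"
    using AB(1) by simp
  then show "b m = \<gamma> m * a 0"
    using eq[of 0] eq[of m] by (simp add: step_a_def step_b_def)
  have "is_nlft m \<gamma> (step_a m (- \<gamma> m) (step_a m (\<gamma> m) A B) (step_b m (\<gamma> m) A B))
      (step_b m (- \<gamma> m) (step_a m (\<gamma> m) A B) (step_b m (\<gamma> m) A B))"
    using step_uminus_step[of m "- \<gamma> m" A B]
    by (intro is_nlft_cong[OF AB(2)]) simp_all
  then show "is_nlft m \<gamma> (step_a m (- \<gamma> m) a b) (step_b m (- \<gamma> m) a b)"
    using step_cong[OF eq, where g = "- \<gamma> m"] by simp
qed

lemma layer_strip_unique:
  "(a, b) \<in> Sn n \<Longrightarrow> is_nlft n \<gamma> a b \<Longrightarrow> k < n \<Longrightarrow> \<gamma> k = layer_strip n a b k"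
proof (induction n arbitrary: a b k)
  case 0
  then show ?case
    by simp
next
  case (Suc m)
  have a0: "a 0 \<noteq> 0"
    using SnD(4)[OF Suc.prems(1)] by auto
  consider "m = 0" | "m \<ge> 1"
    by linarith
  then show ?case
  proof cases
    case 1
    then have "a 0 = of_real (nlft_scale (\<gamma> 0)) \<and> b 0 = of_real (nlft_scale (\<gamma> 0)) * \<gamma> 0"
      using is_nlft_coeffs_eq[OF _ is_nlft_1[of \<gamma>], of a b 0] Suc.prems(2) by simp
    with 1 a0 Suc.prems(3) show ?thesis
      by simp
  next
    case 2
    have g: "\<gamma> m = b m / a 0"
      using is_nlft_SucD(1)[OF Suc.prems(2) 2] a0 by simp
    have "is_nlft m \<gamma> (step_a m (- (b m / a 0)) a b) (step_b m (- (b m / a 0)) a b)"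
      using is_nlft_SucD(2)[OF Suc.prems(2) 2] g by simp
    note IH = Suc.IH[OF Sn_strip(1)[OF Suc.prems(1) 2] this]
    show ?thesis
      using IH[of k] g Suc.prems(3) by (cases "k = m") auto
  qed
qed

lemma inv_nlft_eq_layer_strip:
  assumes "(a, b) \<in> Sn n"
  shows "inv_nlft n a b = layer_strip n a b"
  unfolding inv_nlft_def
proof (rule the_equality)
  show "(\<forall>k\<ge>n. layer_strip n a b k = 0) \<and> is_nlft n (layer_strip n a b) a b"
    using layer_strip_eq_0 is_nlft_layer_strip[OF assms] by auto
  fix \<gamma>
  assume "(\<forall>k\<ge>n. \<gamma> k = 0) \<and> is_nlft n \<gamma> a b"
  then show "\<gamma> = layer_strip n a b"
    using layer_strip_unique[OF assms] layer_strip_eq_0 by (metis ext not_le)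
qed

lemma inj_on_inv_nlft: "inj_on (\<lambda>(a, b). inv_nlft n a b) (Sn n)"
proof (rule inj_onI)
  fix p q
  assume "p \<in> Sn n" "q \<in> Sn n" and eq: "(\<lambda>(a, b). inv_nlft n a b) p = (\<lambda>(a, b). inv_nlft n a b) q"
  then obtain a b a' b' where pq: "p = (a, b)" "q = (a', b')" and
    ab: "(a, b) \<in> Sn n" and ab': "(a', b') \<in> Sn n"
    by (metis surj_pair)
  have "is_nlft n (layer_strip n a b) a b" "is_nlft n (layer_strip n a b) a' b'"
    using is_nlft_layer_strip[OF ab] is_nlft_layer_strip[OF ab'] eq pq
      inv_nlft_eq_layer_strip[OF ab] inv_nlft_eq_layer_strip[OF ab'] by simp_all
  then have "a k = a' k \<and> b k = b' k" for k
    using is_nlft_coeffs_eq[of n _ a b a' b' k] SnD(1,2)[OF ab] SnD(1,2)[OF ab'] by (cases "k < n") auto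
  with pq show "p = q"
    by auto
qed

section \<open>Lipschitz estimates\<close>

lemma sqrt_one_plus_sq_diff_le:
  fixes x y :: real
  shows "\<bar>sqrt (1 + x\<^sup>2) - sqrt (1 + y\<^sup>2)\<bar> \<le> \<bar>x - y\<bar>"
proof -
  define s where "s = sqrt (1 + x\<^sup>2)"
  define t where "t = sqrt (1 + y\<^sup>2)"
  have x: "\<bar>x\<bar> \<le> s" and y: "\<bar>y\<bar> \<le> t"
    unfolding s_def t_def by (simp_all add: real_le_rsqrt)
  have pos: "s + t > 0"
    unfolding s_def t_def by (simp add: add_pos_pos add_pos_nonneg)
  have "(s - t) * (s + t) = (x - y) * (x + y)"
    unfolding s_def t_def by (simp add: algebra_simps power2_eq_square add_nonneg_nonneg)
  then have "\<bar>s - t\<bar> * (s + t) = \<bar>x - y\<bar> * \<bar>x + y\<bar>"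
    using pos by (metis abs_mult abs_of_pos)
  also have "\<dots> \<le> \<bar>x - y\<bar> * (s + t)"
    using x y by (intro mult_left_mono) auto
  finally show ?thesis
    using pos unfolding s_def t_def by simp
qed

lemma nlft_scale_diff_le:
  shows "\<bar>nlft_scale g - nlft_scale g'\<bar> \<le> cmod (g - g')"
    and "\<bar>nlft_scale g - nlft_scale g'\<bar> * cmod g' \<le> cmod (g - g')"
proof -
  define s where "s = sqrt (1 + (cmod g)\<^sup>2)"
  define t where "t = sqrt (1 + (cmod g')\<^sup>2)"
  have s: "1 \<le> s" and t: "1 \<le> t" and g': "cmod g' \<le> t"
    unfolding s_def t_def by (simp_all add: real_le_rsqrt)
  have st: "\<bar>s - t\<bar> \<le> cmod (g - g')"
    using sqrt_one_plus_sq_diff_le[of "cmod g" "cmod g'"] norm_triangle_ineq3[of g g']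
    unfolding s_def t_def by linarith
  have "nlft_scale g - nlft_scale g' = (t - s) / s / t"
    using s t by (simp add: nlft_scale_def s_def[symmetric] t_def[symmetric] field_simps)
  then have eq: "\<bar>nlft_scale g - nlft_scale g'\<bar> = \<bar>s - t\<bar> / s / t"
    using s t by (simp add: abs_div abs_minus_commute)
  have le: "\<bar>s - t\<bar> / s \<le> \<bar>s - t\<bar>"
    using s by (simp add: divide_le_eq mult_le_cancel_left1)
  have "\<bar>s - t\<bar> / s / t \<le> \<bar>s - t\<bar> / s"
    using s t by (simp add: divide_le_eq mult_le_cancel_left1)
  with le st show "\<bar>nlft_scale g - nlft_scale g'\<bar> \<le> cmod (g - g')"
    unfolding eq by linarith
  have "\<bar>s - t\<bar> / s / t * cmod g' = \<bar>s - t\<bar> / s * (cmod g' / t)"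
    by simp
  also have "\<dots> \<le> \<bar>s - t\<bar> * 1"
    using le g' t by (intro mult_mono) auto
  finally show "\<bar>nlft_scale g - nlft_scale g'\<bar> * cmod g' \<le> cmod (g - g')"
    unfolding eq using st by simp
qed

lemma norm_nlft_scale_mult_le_1: "cmod (of_real (nlft_scale g) * g) \<le> 1"
proof -
  have "cmod g \<le> sqrt (1 + (cmod g)\<^sup>2)"
    by (rule real_le_rsqrt) simp
  moreover have "cmod (of_real (nlft_scale g) * g) = nlft_scale g * cmod g"
    using nlft_scale_pos[of g] by (simp add: norm_mult)
  ultimately show ?thesis
    by (simp add: nlft_scale_def divide_le_eq_1 add_pos_nonneg)
qed

lemma nlft_scale_mult_diff_le:
  "cmod (of_real (nlft_scale g) * g - of_real (nlft_scale g') * g') \<le> 2 * cmod (g - g')"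
proof -
  have "of_real (nlft_scale g) * g - of_real (nlft_scale g') * g'
      = of_real (nlft_scale g) * (g - g') + of_real (nlft_scale g - nlft_scale g') * g'"
    by (simp add: algebra_simps)
  then have "cmod (of_real (nlft_scale g) * g - of_real (nlft_scale g') * g')
      \<le> cmod (of_real (nlft_scale g) * (g - g')) + cmod (of_real (nlft_scale g - nlft_scale g') * g')"
    by (metis norm_triangle_ineq)
  also have "\<dots> = nlft_scale g * cmod (g - g') + \<bar>nlft_scale g - nlft_scale g'\<bar> * cmod g'"
    using nlft_scale_pos[of g] by (simp only: norm_mult norm_of_real abs_of_pos)
  also have "\<dots> \<le> 1 * cmod (g - g') + cmod (g - g')"
    using nlft_scale_le_1[of g] nlft_scale_diff_le(2)[of g g'] by (intro add_mono mult_right_mono) auto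
  finally show ?thesis
    by simp
qed

lemma norm_bilinear_diff_le:
  fixes t u x y t' u' x' y' :: complex
  assumes "cmod (t - t') \<le> \<eta>" "cmod (u - u') \<le> 2 * \<eta>"
    and "cmod x \<le> 1" "cmod y \<le> 1" "cmod t' \<le> 1" "cmod u' \<le> 1"
    and "cmod (x - x') \<le> \<epsilon>" "cmod (y - y') \<le> \<epsilon>"
  shows "cmod (t * x + u * y - (t' * x' + u' * y')) \<le> 2 * \<epsilon> + 3 * \<eta>"
proof -
  have "t * x + u * y - (t' * x' + u' * y') = (t - t') * x + t' * (x - x') + ((u - u') * y + u' * (y - y'))"
    by (simp add: algebra_simps)
  then have "cmod (t * x + u * y - (t' * x' + u' * y'))
      \<le> cmod ((t - t') * x + t' * (x - x')) + cmod ((u - u') * y + u' * (y - y'))"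
    by (metis norm_triangle_ineq)
  also have "\<dots> \<le> cmod ((t - t') * x) + cmod (t' * (x - x')) + (cmod ((u - u') * y) + cmod (u' * (y - y')))"
    by (intro add_mono norm_triangle_ineq)
  also have "\<dots> = cmod (t - t') * cmod x + cmod t' * cmod (x - x') + (cmod (u - u') * cmod y + cmod u' * cmod (y - y'))"
    by (simp only: norm_mult)
  also have "\<dots> \<le> \<eta> * 1 + 1 * \<epsilon> + (2 * \<eta> * 1 + 1 * \<epsilon>)"
  proof -
    have "0 \<le> \<eta>"
      using assms(1) norm_ge_zero[of "t - t'"] by linarith
    with assms show ?thesis
      by (intro add_mono mult_mono) auto
  qed
  finally show ?thesis
    by simp
qed

lemma step_diff_le:
  assumes "cmod (g - g') \<le> \<eta>"
    and diff: "\<And>k. cmod (a k - a' k) \<le> \<epsilon> \<and> cmod (b k - b' k) \<le> \<epsilon>"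
    and bound: "\<And>k. cmod (a k) \<le> 1 \<and> cmod (b k) \<le> 1"
  shows "cmod (step_a m g a b k - step_a m g' a' b' k) \<le> 2 * \<epsilon> + 3 * \<eta>"
    and "cmod (step_b m g a b k - step_b m g' a' b' k) \<le> 2 * \<epsilon> + 3 * \<eta>"
proof -
  let ?c = "of_real (nlft_scale g) :: complex" and ?c' = "of_real (nlft_scale g') :: complex"
  have c: "cmod (?c - ?c') \<le> \<eta>"
    using nlft_scale_diff_le(1)[of g g'] assms(1) by (simp only: norm_of_real flip: of_real_diff)
  have cg: "cmod (?c * g - ?c' * g') \<le> 2 * \<eta>"
    using nlft_scale_mult_diff_le[of g g'] assms(1) by linarith
  have cnj_cg: "cmod (- cnj (?c * g) - - cnj (?c' * g')) \<le> 2 * \<eta>"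
    using cg by (simp only: minus_diff_minus complex_cnj_diff[symmetric] norm_minus_cancel complex_mod_cnj)
  have c': "cmod ?c' \<le> 1"
    using nlft_scale_le_1[of g'] nlft_scale_pos[of g'] by simp
  have cg': "cmod (?c' * g') \<le> 1"
    by (rule norm_nlft_scale_mult_le_1)
  then have cnj_cg': "cmod (- cnj (?c' * g')) \<le> 1"
    by (simp only: norm_minus_cancel complex_mod_cnj)
  have nonneg: "0 \<le> 2 * \<epsilon> + 3 * \<eta>"
    using assms(1) diff[of 0] norm_ge_zero[of "g - g'"] norm_ge_zero[of "a 0 - a' 0"] by linarith
  show "cmod (step_a m g a b k - step_a m g' a' b' k) \<le> 2 * \<epsilon> + 3 * \<eta>"
  proof (cases "k \<le> m")
    case True
    then have "step_a m g a b k - step_a m g' a' b' k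
        = ?c * a k + (- cnj (?c * g)) * b (m - k) - (?c' * a' k + (- cnj (?c' * g')) * b' (m - k))"
      by (simp add: step_a_def algebra_simps)
    also have "cmod \<dots> \<le> 2 * \<epsilon> + 3 * \<eta>"
      by (rule norm_bilinear_diff_le[OF c cnj_cg _ _ c' cnj_cg']) (use bound diff in auto)
    finally show ?thesis .
  qed (use nonneg in \<open>simp add: step_a_def\<close>)
  show "cmod (step_b m g a b k - step_b m g' a' b' k) \<le> 2 * \<epsilon> + 3 * \<eta>"
  proof (cases "k \<le> m")
    case True
    then have "step_b m g a b k - step_b m g' a' b' k
        = ?c * b k + (?c * g) * a (m - k) - (?c' * b' k + (?c' * g') * a' (m - k))"
      by (simp add: step_b_def algebra_simps)
    also have "cmod \<dots> \<le> 2 * \<epsilon> + 3 * \<eta>"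
      by (rule norm_bilinear_diff_le[OF c cg _ _ c' cg']) (use bound diff in auto)
    finally show ?thesis .
  qed (use nonneg in \<open>simp add: step_b_def\<close>)
qed

lemma Sn_ratio_diff_le:
  assumes ab: "(a, b) \<in> Sn n" and ab': "(a', b') \<in> Sn n'"
    and "cmod (a 0 - a' 0) \<le> \<epsilon>" "cmod (b m - b' m) \<le> \<epsilon>"
    and "1 / Re (a 0) \<le> D" "1 / Re (a' 0) \<le> D"
  shows "cmod (b m / a 0 - b' m / a' 0) \<le> \<epsilon> * (D + D\<^sup>2)"
proof -
  have a: "cmod (a 0) = Re (a 0)" "Re (a 0) > 0"
    using SnD(3,4)[OF ab] by (metis norm_of_real abs_of_pos)+
  have a': "cmod (a' 0) = Re (a' 0)" "Re (a' 0) > 0"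
    using SnD(3,4)[OF ab'] by (metis norm_of_real abs_of_pos)+
  have "a 0 \<noteq> 0" "a' 0 \<noteq> 0"
    using a a' by auto
  have "b m / a 0 - b' m / a' 0 = (b m - b' m) * (1 / a 0) + b' m * (a' 0 - a 0) * (1 / a 0) * (1 / a' 0)"
    using \<open>a 0 \<noteq> 0\<close> \<open>a' 0 \<noteq> 0\<close> by (simp add: field_simps)
  then have "cmod (b m / a 0 - b' m / a' 0)
      \<le> cmod ((b m - b' m) * (1 / a 0)) + cmod (b' m * (a' 0 - a 0) * (1 / a 0) * (1 / a' 0))"
    by (metis norm_triangle_ineq)
  also have "\<dots> = cmod (b m - b' m) * (1 / Re (a 0))
      + cmod (b' m) * cmod (a 0 - a' 0) * (1 / Re (a 0)) * (1 / Re (a' 0))"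
    by (simp only: norm_mult norm_divide norm_one a(1) a'(1) norm_minus_commute[of "a' 0"])
  also have "\<dots> \<le> \<epsilon> * D + 1 * \<epsilon> * D * D"
  proof -
    have "0 \<le> \<epsilon>" "0 \<le> D"
      using assms(3,5) a(2) norm_ge_zero[of "a 0 - a' 0"] by (smt (verit) divide_pos_pos)+
    then show ?thesis
      using assms(3-6) a(2) a'(2) Sn_coeff_le_1[OF ab', of m]
      by (intro add_mono mult_mono) auto
  qed
  finally show ?thesis
    by (simp add: algebra_simps power2_eq_square)
qed

lemma strip_diff_le:
  fixes m :: nat
  assumes ab: "(a, b) \<in> Sn n" and ab': "(a', b') \<in> Sn n'"
    and diff: "\<And>k. cmod (a k - a' k) \<le> \<epsilon> \<and> cmod (b k - b' k) \<le> \<epsilon>"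
    and D: "1 / Re (a 0) \<le> D" "1 / Re (a' 0) \<le> D"
  defines "g \<equiv> b m / a 0" and "g' \<equiv> b' m / a' 0"
  shows "cmod (g - g') \<le> \<epsilon> * (D + D\<^sup>2)"
    and "cmod (step_a m (- g) a b k - step_a m (- g') a' b' k) \<le> \<epsilon> * (3 * (1 + D)\<^sup>2)"
    and "cmod (step_b m (- g) a b k - step_b m (- g') a' b' k) \<le> \<epsilon> * (3 * (1 + D)\<^sup>2)"
proof -
  show g: "cmod (g - g') \<le> \<epsilon> * (D + D\<^sup>2)"
    unfolding g_def g'_def using Sn_ratio_diff_le[OF ab ab' _ _ D] diff by blast
  then have "cmod (- g - - g') \<le> \<epsilon> * (D + D\<^sup>2)"
    by (simp add: norm_minus_commute)
  note step = step_diff_le[OF this diff Sn_coeff_le_1[OF ab]]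
  have "0 \<le> \<epsilon>"
    using diff[of 0] norm_ge_zero[of "a 0 - a' 0"] by linarith
  moreover have "0 \<le> D"
    using D(1) SnD(4)[OF ab] by (smt (verit) divide_pos_pos)
  ultimately have "2 * \<epsilon> + 3 * (\<epsilon> * (D + D\<^sup>2)) \<le> \<epsilon> * (3 * (1 + D)\<^sup>2)"
    by (simp add: power2_eq_square algebra_simps)
  with step show "cmod (step_a m (- g) a b k - step_a m (- g') a' b' k) \<le> \<epsilon> * (3 * (1 + D)\<^sup>2)"
    and "cmod (step_b m (- g) a b k - step_b m (- g') a' b' k) \<le> \<epsilon> * (3 * (1 + D)\<^sup>2)"
    by (meson order_trans)+
qed

definition strip_lipschitz_const :: "nat \<Rightarrow> real \<Rightarrow> real" where
  "strip_lipschitz_const n D = (D + D\<^sup>2) * (\<Sum>k<n. (3 * (1 + D)\<^sup>2) ^ k)"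

lemma strip_lipschitz_const_Suc:
  "strip_lipschitz_const (Suc m) D = D + D\<^sup>2 + 3 * (1 + D)\<^sup>2 * strip_lipschitz_const m D"
  unfolding strip_lipschitz_const_def sum.lessThan_Suc_shift
  by (simp add: sum_distrib_left algebra_simps del: sum.lessThan_Suc)

lemma strip_lipschitz_const_lt:
  assumes "D > 0" "n \<ge> 1"
  shows "strip_lipschitz_const n D < (3 * real n) ^ n * (1 + D) ^ (2 * n)"
proof -
  define R where "R = 3 * (1 + D)\<^sup>2"
  obtain p where p: "n = Suc p"
    using assms(2) by (cases n) auto
  have "1 \<le> (1 + D)\<^sup>2"
    using assms(1) by (simp add: one_le_power)
  then have R: "1 \<le> R"
    unfolding R_def by linarith
  have "(\<Sum>k<n. R ^ k) \<le> (\<Sum>k<n. R ^ p)"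
    using p R by (intro sum_mono power_increasing) auto
  then have S: "(\<Sum>k<n. R ^ k) \<le> real n * R ^ p"
    by simp
  have "strip_lipschitz_const n D \<le> (D + D\<^sup>2) * (real n * R ^ p)"
    unfolding strip_lipschitz_const_def R_def[symmetric] using assms(1) S by (intro mult_left_mono) auto
  also have "\<dots> < (1 + D)\<^sup>2 * (real n * R ^ p)"
  proof (rule mult_strict_right_mono)
    show "D + D\<^sup>2 < (1 + D)\<^sup>2"
      using assms(1) by (simp add: power2_eq_square algebra_simps)
    show "0 < real n * R ^ p"
      using p R by simp
  qed
  also have "\<dots> = real n * 3 ^ p * (1 + D) ^ (2 * n)"
    by (simp add: R_def p power_mult_distrib power_mult[symmetric] power_add[symmetric] mult_ac)
  also have "\<dots> \<le> (3 * real n) ^ n * (1 + D) ^ (2 * n)"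
  proof -
    have "real n \<le> real n ^ n" "(3::real) ^ p \<le> 3 ^ n"
      using p by (auto intro: power_increasing simp del: of_nat_Suc)
    then have "real n * 3 ^ p \<le> (3 * real n) ^ n"
      by (simp add: power_mult_distrib mult_mono mult.commute)
    then show ?thesis
      using assms(1) by (intro mult_right_mono) auto
  qed
  finally show ?thesis .
qed

lemma layer_strip_diff_le:
  "(a, b) \<in> Sn n \<Longrightarrow> (a', b') \<in> Sn n \<Longrightarrow>
   (\<And>k. cmod (a k - a' k) \<le> \<epsilon> \<and> cmod (b k - b' k) \<le> \<epsilon>) \<Longrightarrow>
   1 / Re (a 0) \<le> D \<Longrightarrow> 1 / Re (a' 0) \<le> D \<Longrightarrow>
   l1norm n (\<lambda>k. layer_strip n a b k - layer_strip n a' b' k) \<le> \<epsilon> * strip_lipschitz_const n D"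
proof (induction n arbitrary: a b a' b' \<epsilon>)
  case 0
  then show ?case
    using Sn_length_pos by fastforce
next
  case (Suc m)
  let ?g = "b m / a 0" and ?g' = "b' m / a' 0"
  let ?a = "step_a m (- ?g) a b" and ?b = "step_b m (- ?g) a b"
    and ?a' = "step_a m (- ?g') a' b'" and ?b' = "step_b m (- ?g') a' b'"
  note strip = strip_diff_le[OF Suc.prems]
  have l1: "l1norm (Suc m) (\<lambda>k. layer_strip (Suc m) a b k - layer_strip (Suc m) a' b' k)
      = l1norm m (\<lambda>k. layer_strip m ?a ?b k - layer_strip m ?a' ?b' k) + cmod (?g - ?g')"
    unfolding l1norm_def by simp
  consider "m = 0" | "m \<ge> 1"
    by linarith
  then show ?case
  proof cases
    case 1
    then show ?thesis
      using l1 strip(1) by (simp add: l1norm_def strip_lipschitz_const_def)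
  next
    case 2
    note S = Sn_strip[OF Suc.prems(1) 2] and S' = Sn_strip[OF Suc.prems(2) 2]
    have "1 / Re (?a 0) \<le> D" "1 / Re (?a' 0) \<le> D"
      using S(2) S'(2) SnD(4)[OF Suc.prems(1)] SnD(4)[OF Suc.prems(2)] Suc.prems(4,5)
      by (meson divide_left_mono order_trans zero_le_one mult_pos_pos order_less_le_trans)+
    then have "l1norm m (\<lambda>k. layer_strip m ?a ?b k - layer_strip m ?a' ?b' k)
        \<le> \<epsilon> * (3 * (1 + D)\<^sup>2) * strip_lipschitz_const m D"
      using Suc.IH[OF S(1) S'(1)] strip(2,3) by blast
    moreover have "\<epsilon> * (D + D\<^sup>2 + 3 * (1 + D)\<^sup>2 * strip_lipschitz_const m D)
        = \<epsilon> * (D + D\<^sup>2) + \<epsilon> * (3 * (1 + D)\<^sup>2) * strip_lipschitz_const m D"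
      by (simp add: algebra_simps)
    ultimately show ?thesis
      unfolding l1 strip_lipschitz_const_Suc using strip(1)[where m = m] by linarith
  qed
qed

lemma supnorm_ge: "k < n \<Longrightarrow> cmod (v k) \<le> supnorm n v"
  unfolding supnorm_def by (rule Max_ge) auto

lemma supnorm_nonneg: "0 \<le> supnorm n v"
  unfolding supnorm_def by (rule Max_ge) auto

lemma Sn_supnorm_diffD:
  assumes "(a, b) \<in> Sn n" "(a', b') \<in> Sn n"
    and "supnorm n (\<lambda>k. a k - a' k) \<le> \<epsilon>" "supnorm n (\<lambda>k. b k - b' k) \<le> \<epsilon>"
  shows "cmod (a k - a' k) \<le> \<epsilon> \<and> cmod (b k - b' k) \<le> \<epsilon>"
proof (cases "k < n")
  case True
  then show ?thesis
    using supnorm_ge[OF True, of "\<lambda>k. a k - a' k"] supnorm_ge[OF True, of "\<lambda>k. b k - b' k"] assms(3,4)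
    by auto
next
  case False
  have "0 \<le> \<epsilon>"
    using supnorm_nonneg assms(3) by (rule order_trans)
  with False show ?thesis
    using SnD(1,2)[OF assms(1)] SnD(1,2)[OF assms(2)] by simp
qed

lemma inv_nlft_diff_le:
  assumes ab: "(a, b) \<in> Sn n" and ab': "(a', b') \<in> Sn n"
    and "supnorm n (\<lambda>k. a k - a' k) \<le> \<epsilon>" "supnorm n (\<lambda>k. b k - b' k) \<le> \<epsilon>"
    and "1 / Re (a 0) \<le> D" "1 / Re (a' 0) \<le> D"
  shows "l1norm n (\<lambda>k. inv_nlft n a b k - inv_nlft n a' b' k) \<le> \<epsilon> * strip_lipschitz_const n D"
  unfolding inv_nlft_eq_layer_strip[OF ab] inv_nlft_eq_layer_strip[OF ab']
  using assms by (intro layer_strip_diff_le Sn_supnorm_diffD)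

lemma inv_nlft_locally_lipschitz:
  "\<forall>p\<in>Sn n. \<exists>r>0. \<exists>L. \<forall>q\<in>Sn n. \<forall>q'\<in>Sn n.
     distS n p q < r \<and> distS n p q' < r \<longrightarrow>
     l1norm n (\<lambda>k. inv_nlft n (fst q) (snd q) k - inv_nlft n (fst q') (snd q') k) \<le> L * distS n q q'"
proof
  fix p
  assume p: "p \<in> Sn n"
  define \<rho> where "\<rho> = Re (fst p 0)"
  have \<rho>: "\<rho> > 0"
    using p SnD(4)[of "fst p" "snd p"] by (simp add: \<rho>_def)
  have n: "0 < n"
    using p Sn_length_pos[of "fst p" "snd p"] by fastforce
  have near: "1 / Re (fst q 0) \<le> 2 / \<rho>" if "distS n p q < \<rho> / 2" for q
  proof -
    have "Re (fst p 0 - fst q 0) \<le> cmod (fst p 0 - fst q 0)"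
      by (rule complex_Re_le_cmod)
    also have "\<dots> \<le> distS n p q"
      unfolding distS_def using supnorm_ge[OF n, of "\<lambda>k. fst p k - fst q k"] by linarith
    finally have "\<rho> / 2 < Re (fst q 0)"
      using that \<rho>_def by simp
    then show ?thesis
      using \<rho> by (simp add: field_simps)
  qed
  show "\<exists>r>0. \<exists>L. \<forall>q\<in>Sn n. \<forall>q'\<in>Sn n. distS n p q < r \<and> distS n p q' < r \<longrightarrow>
      l1norm n (\<lambda>k. inv_nlft n (fst q) (snd q) k - inv_nlft n (fst q') (snd q') k) \<le> L * distS n q q'"
  proof (intro exI conjI ballI impI)
    show "\<rho> / 2 > 0"
      using \<rho> by simp
    fix q q'
    assume "q \<in> Sn n" "q' \<in> Sn n" and "distS n p q < \<rho> / 2 \<and> distS n p q' < \<rho> / 2"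
    then show "l1norm n (\<lambda>k. inv_nlft n (fst q) (snd q) k - inv_nlft n (fst q') (snd q') k)
        \<le> strip_lipschitz_const n (2 / \<rho>) * distS n q q'"
      using inv_nlft_diff_le[of "fst q" "snd q" n "fst q'" "snd q'" "distS n q q'" "2 / \<rho>"] near
      by (simp add: distS_def mult.commute)
  qed
qed

theorem lemma6p2:
  fixes n :: nat and a b a' b' :: "nat \<Rightarrow> complex" and \<epsilon> :: real
  assumes "n \<ge> 2"
    and "(a, b) \<in> Sn n" and "(a', b') \<in> Sn n"
    and "\<epsilon> > 0"
    and "supnorm n (\<lambda>k. a k - a' k) \<le> \<epsilon>"
    and "supnorm n (\<lambda>k. b k - b' k) \<le> \<epsilon>"
  shows "l1norm n (\<lambda>k. inv_nlft n a b k - inv_nlft n a' b' k)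
           < \<epsilon> * (3 * real n) ^ n * (1 + 1 / min (Re (a 0)) (Re (a' 0))) ^ (2 * n)
       \<and> inj_on (\<lambda>(a, b). inv_nlft n a b) (Sn n)
       \<and> (\<forall>p\<in>Sn n. \<exists>r>0. \<exists>L. \<forall>q\<in>Sn n. \<forall>q'\<in>Sn n.
            distS n p q < r \<and> distS n p q' < r \<longrightarrow>
            l1norm n (\<lambda>k. inv_nlft n (fst q) (snd q) k - inv_nlft n (fst q') (snd q') k)
              \<le> L * distS n q q')"
proof (intro conjI inj_on_inv_nlft inv_nlft_locally_lipschitz)
  define D where "D = 1 / min (Re (a 0)) (Re (a' 0))"
  have pos: "Re (a 0) > 0" "Re (a' 0) > 0"
    using SnD(4) assms(2,3) by blast+
  then have "D > 0" "1 / Re (a 0) \<le> D" "1 / Re (a' 0) \<le> D"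
    unfolding D_def by (auto intro: divide_left_mono)
  then have "l1norm n (\<lambda>k. inv_nlft n a b k - inv_nlft n a' b' k) \<le> \<epsilon> * strip_lipschitz_const n D"
    using assms(2,3,5,6) by (intro inv_nlft_diff_le) auto
  also have "\<dots> < \<epsilon> * ((3 * real n) ^ n * (1 + D) ^ (2 * n))"
    using \<open>D > 0\<close> assms(1,4) by (intro mult_strict_left_mono strip_lipschitz_const_lt) auto
  finally show "l1norm n (\<lambda>k. inv_nlft n a b k - inv_nlft n a' b' k)
      < \<epsilon> * (3 * real n) ^ n * (1 + 1 / min (Re (a 0)) (Re (a' 0))) ^ (2 * n)"
    by (simp add: D_def mult.assoc)
qed

end
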